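(* Let $X$ be a Banach space of analytic functions on $\mathbb{U}$ such that the sequence $\{u_n\}$, $u_n(z)=z^n$, is contained in and bounded in $X$, and let $E\hookrightarrow\ell_\infty$ be a Banach sequence lattice. Let $\lambda=\{\lambda_n\}$ be such that the multiplier operator $M_\lambda\colon X\to E$, $M_\lambda f=\{\lambda_n\hat f(n)\}$, is defined. If $M_\lambda\colon X\to E$ is compact, then \[\limsup_{n\to\infty}|\lambda_n|=0.\]
   Context: $\mathbb{U}$ is the open unit disk and $f=\sum_{n\ge0}\hat f(n)u_n$ the Taylor expansion; "$\hookrightarrow$" denotes continuous inclusion. A Banach sequence lattice on $\mathbb{Z}_+$ is a Banach space $E$ of sequences with $|y_n|\le|x_n|$ for all $n$, $x\in E$ implying $y\in E$ and $\|y\|_E\le\|x\|_E$. *)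

theory Defs
  imports "HOL-Analysis.Analysis"
begin

text \<open>Analytic functions on the open unit disk are represented as functions
complex to complex that vanish outside the disk (canonical representatives).\<close>

abbreviation unit_disk :: "complex set" where
  "unit_disk \<equiv> ball 0 1"

definition monomial_fun :: "nat \<Rightarrow> complex \<Rightarrow> complex" where
  "monomial_fun n = (\<lambda>z. if z \<in> unit_disk then z ^ n else 0)"

definition taylor_coeff :: "(complex \<Rightarrow> complex) \<Rightarrow> nat \<Rightarrow> complex" where
  "taylor_coeff f n = (deriv ^^ n) f 0 / of_nat (fact n)"

definition banach_space_of_analytic_functions ::
  "(complex \<Rightarrow> complex) set \<Rightarrow> ((complex \<Rightarrow> complex) \<Rightarrow> real) \<Rightarrow> bool" where
  "banach_space_of_analytic_functions X N \<longleftrightarrow>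
     (\<forall>f\<in>X. f holomorphic_on unit_disk \<and> (\<forall>z. z \<notin> unit_disk \<longrightarrow> f z = 0)) \<and>
     (\<lambda>z. 0) \<in> X \<and>
     (\<forall>f\<in>X. \<forall>g\<in>X. (\<lambda>z. f z + g z) \<in> X) \<and>
     (\<forall>c. \<forall>f\<in>X. (\<lambda>z. c * f z) \<in> X) \<and>
     (\<forall>f\<in>X. 0 \<le> N f \<and> (N f = 0 \<longleftrightarrow> f = (\<lambda>z. 0))) \<and>
     (\<forall>f\<in>X. \<forall>g\<in>X. N (\<lambda>z. f z + g z) \<le> N f + N g) \<and>
     (\<forall>c. \<forall>f\<in>X. N (\<lambda>z. c * f z) = cmod c * N f) \<and>
     (\<forall>F. (\<forall>k. F k \<in> X) \<and>
          (\<forall>e>0. \<exists>M. \<forall>m\<ge>M. \<forall>n\<ge>M. N (\<lambda>z. F m z - F n z) < e) \<longrightarrow>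
          (\<exists>f\<in>X. (\<lambda>k. N (\<lambda>z. F k z - f z)) \<longlonglongrightarrow> 0))"

definition banach_sequence_lattice ::
  "(nat \<Rightarrow> complex) set \<Rightarrow> ((nat \<Rightarrow> complex) \<Rightarrow> real) \<Rightarrow> bool" where
  "banach_sequence_lattice E NE \<longleftrightarrow>
     (\<lambda>n. 0) \<in> E \<and>
     (\<forall>x\<in>E. \<forall>y\<in>E. (\<lambda>n. x n + y n) \<in> E) \<and>
     (\<forall>c. \<forall>x\<in>E. (\<lambda>n. c * x n) \<in> E) \<and>
     (\<forall>x\<in>E. 0 \<le> NE x \<and> (NE x = 0 \<longleftrightarrow> x = (\<lambda>n. 0))) \<and>
     (\<forall>x\<in>E. \<forall>y\<in>E. NE (\<lambda>n. x n + y n) \<le> NE x + NE y) \<and>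
     (\<forall>c. \<forall>x\<in>E. NE (\<lambda>n. c * x n) = cmod c * NE x) \<and>
     (\<forall>F. (\<forall>k. F k \<in> E) \<and>
          (\<forall>e>0. \<exists>M. \<forall>m\<ge>M. \<forall>n\<ge>M. NE (\<lambda>i. F m i - F n i) < e) \<longrightarrow>
          (\<exists>x\<in>E. (\<lambda>k. NE (\<lambda>i. F k i - x i)) \<longlonglongrightarrow> 0)) \<and>
     (\<forall>x\<in>E. \<forall>y. (\<forall>n. cmod (y n) \<le> cmod (x n)) \<longrightarrow> y \<in> E \<and> NE y \<le> NE x)"

definition embeds_in_linfty ::
  "(nat \<Rightarrow> complex) set \<Rightarrow> ((nat \<Rightarrow> complex) \<Rightarrow> real) \<Rightarrow> bool" where
  "embeds_in_linfty E NE \<longleftrightarrow> (\<exists>C. \<forall>x\<in>E. \<forall>n. cmod (x n) \<le> C * NE x)"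

definition multiplier_op :: "(nat \<Rightarrow> complex) \<Rightarrow> (complex \<Rightarrow> complex) \<Rightarrow> nat \<Rightarrow> complex" where
  "multiplier_op lam f = (\<lambda>n. lam n * taylor_coeff f n)"

definition compact_mult_operator ::
  "(complex \<Rightarrow> complex) set \<Rightarrow> ((complex \<Rightarrow> complex) \<Rightarrow> real) \<Rightarrow>
   (nat \<Rightarrow> complex) set \<Rightarrow> ((nat \<Rightarrow> complex) \<Rightarrow> real) \<Rightarrow>
   ((complex \<Rightarrow> complex) \<Rightarrow> nat \<Rightarrow> complex) \<Rightarrow> bool" where
  "compact_mult_operator X N E NE T \<longleftrightarrow>
     (\<forall>f\<in>X. T f \<in> E) \<and>
     (\<forall>f\<in>X. \<forall>g\<in>X. T (\<lambda>z. f z + g z) = (\<lambda>n. T f n + T g n)) \<and>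
     (\<forall>c::complex. \<forall>f\<in>X. T (\<lambda>z. c * f z) = (\<lambda>n. c * T f n)) \<and>
     (\<forall>(F::nat \<Rightarrow> complex \<Rightarrow> complex) (B::real). (\<forall>k. F k \<in> X \<and> N (F k) \<le> B) \<longrightarrow>
        (\<exists>(r::nat\<Rightarrow>nat) x. strict_mono r \<and> x \<in> E \<and> (\<lambda>k. NE (\<lambda>n. T (F (r k)) n - x n)) \<longlonglongrightarrow> 0))"

end

theory Submission
  imports Defs "HOL-Complex_Analysis.Complex_Analysis" "HOL-Library.Infinite_Set"
begin

text \<open>The images \<open>M\<^sub>\<lambda> u\<^sub>n = \<lambda>\<^sub>n e\<^sub>n\<close> of the bounded sequence of monomials must have a norm
  convergent subsequence in \<open>E\<close>. Since \<open>E \<hookrightarrow> \<ell>\<^sub>\<infinity>\<close>, that subsequence converges uniformly; its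
  pointwise limit is \<open>0\<close> because the supports \<open>{n}\<close> escape to infinity, so \<open>\<lambda>\<^sub>n \<rightarrow> 0\<close> along it.
  Applied to a subsequence on which \<open>|\<lambda>\<^sub>n| \<ge> \<epsilon>\<close>, this is a contradiction.\<close>

lemma taylor_coeff_monomial_fun:
  "taylor_coeff (monomial_fun k) n = (if n = k then 1 else 0)"
proof -
  have "eventually (\<lambda>z. monomial_fun k z = (z - 0) ^ k) (nhds 0)"
    using eventually_nhds_in_open[of "ball (0::complex) 1" 0]
    by (auto elim!: eventually_mono simp: monomial_fun_def)
  then have "(deriv ^^ n) (monomial_fun k) 0 = (deriv ^^ n) (\<lambda>z. (z - 0) ^ k) 0"
    by (rule higher_deriv_cong_ev) simp
  also have "\<dots> = pochhammer (of_nat (Suc k - n)) n * (0 - 0) ^ (k - n)"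
    by (rule higher_deriv_power)
  finally have deriv_eq: "(deriv ^^ n) (monomial_fun k) 0 =
      pochhammer (of_nat (Suc k - n)) n * (0::complex) ^ (k - n)"
    by simp
  consider "n = k" | "n < k" | "k < n"
    by linarith
  then show ?thesis
  proof cases
    case 1
    then show ?thesis
      using deriv_eq by (simp add: taylor_coeff_def pochhammer_fact[symmetric])
  next
    case 2
    then show ?thesis
      using deriv_eq by (simp add: taylor_coeff_def)
  next
    case 3
    then have "Suc k - n = 0" "n > 0"
      by auto
    then show ?thesis
      using deriv_eq by (simp add: taylor_coeff_def pochhammer_0_left)
  qed
qed

lemma multiplier_op_monomial_fun:
  "multiplier_op lam (monomial_fun k) = (\<lambda>n. if n = k then lam k else 0)"
  by (auto simp: multiplier_op_def taylor_coeff_monomial_fun)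

lemma banach_sequence_lattice_diff:
  assumes "banach_sequence_lattice E NE" "x \<in> E" "y \<in> E"
  shows "(\<lambda>i. x i - y i) \<in> E"
proof -
  have neg: "(\<lambda>i. (-1) * y i) \<in> E" and add: "\<forall>x\<in>E. \<forall>y\<in>E. (\<lambda>n. x n + y n) \<in> E"
    using assms unfolding banach_sequence_lattice_def by auto
  from add[rule_format, OF assms(2) neg] show ?thesis
    by simp
qed

lemma compact_mult_operator_subseq:
  fixes F :: "nat \<Rightarrow> complex \<Rightarrow> complex"
  assumes "compact_mult_operator X N E NE T" "\<And>k. F k \<in> X" "\<And>k. N (F k) \<le> B"
  obtains r x where "strict_mono r" "x \<in> E" "(\<lambda>k. NE (\<lambda>n. T (F (r k)) n - x n)) \<longlonglongrightarrow> 0"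
  using assms(1)[unfolded compact_mult_operator_def, THEN conjunct2, THEN conjunct2,
      THEN conjunct2, rule_format, of F B] assms(2,3) that
  by blast

lemma embeds_in_linfty_uniform_limit:
  assumes "embeds_in_linfty E NE"
    and "\<And>k. (\<lambda>i. y k i - x i) \<in> E"
    and "(\<lambda>k. NE (\<lambda>i. y k i - x i)) \<longlonglongrightarrow> 0"
  shows "uniform_limit UNIV y x sequentially"
  unfolding uniform_limit_iff
proof (intro allI impI)
  fix d :: real
  assume "d > 0"
  obtain C where C: "\<forall>z\<in>E. \<forall>n. cmod (z n) \<le> C * NE z"
    using assms(1) unfolding embeds_in_linfty_def by blast
  have "(\<lambda>k. C * NE (\<lambda>i. y k i - x i)) \<longlonglongrightarrow> 0"
    using tendsto_mult_right_zero[OF assms(3)] .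
  then have "eventually (\<lambda>k. C * NE (\<lambda>i. y k i - x i) < d) sequentially"
    using \<open>d > 0\<close> by (rule order_tendstoD)
  moreover have "dist (y k n) (x n) \<le> C * NE (\<lambda>i. y k i - x i)" for k n
    using C[rule_format, OF assms(2)[of k], of n] by (simp add: dist_norm)
  ultimately show "eventually (\<lambda>k. \<forall>n\<in>UNIV. dist (y k n) (x n) < d) sequentially"
    by (auto elim!: eventually_mono intro: le_less_trans)
qed

lemma not_uniform_limit_unit_vectors:
  fixes c :: "nat \<Rightarrow> complex" and m :: "nat \<Rightarrow> nat"
  assumes "filterlim m at_top sequentially" "e > 0" "\<And>k. e \<le> cmod (c k)"
  shows "\<not> uniform_limit UNIV (\<lambda>k n. if n = m k then c k else 0) x sequentially"
proof
  assume unif: "uniform_limit UNIV (\<lambda>k n. if n = m k then c k else 0) x sequentially"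
  have x_zero: "x n = 0" for n
  proof -
    have "eventually (\<lambda>k. Suc n \<le> m k) sequentially"
      using assms(1) unfolding filterlim_at_top by blast
    then have "eventually (\<lambda>k. (if n = m k then c k else 0) = 0) sequentially"
      by (auto elim!: eventually_mono)
    then have "((\<lambda>k. if n = m k then c k else 0) \<longlongrightarrow> 0) sequentially"
      by (rule tendsto_eventually)
    moreover have "((\<lambda>k. if n = m k then c k else 0) \<longlongrightarrow> x n) sequentially"
      using tendsto_uniform_limitI[OF unif UNIV_I] .
    ultimately show ?thesis
      using LIMSEQ_unique by blast
  qed
  have "eventually (\<lambda>k. \<forall>n\<in>UNIV. dist (if n = m k then c k else 0) (x n) < e) sequentially"
    using unif assms(2) unfolding uniform_limit_iff by blast
  then have "eventually (\<lambda>k. cmod (c k) < e) sequentially"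
  proof (rule eventually_mono)
    fix k
    assume "\<forall>n\<in>UNIV. dist (if n = m k then c k else 0) (x n) < e"
    from this[rule_format, of "m k"] show "cmod (c k) < e"
      by (simp add: x_zero dist_norm)
  qed
  then obtain k where "cmod (c k) < e"
    unfolding eventually_sequentially by blast
  then show False
    using assms(3)[of k] by linarith
qed

lemma not_LIMSEQ_zero_subseq_bounded_below:
  fixes f :: "nat \<Rightarrow> real"
  assumes "\<not> f \<longlonglongrightarrow> 0"
  obtains e and s :: "nat \<Rightarrow> nat" where "e > 0" "strict_mono s" "\<And>n. e \<le> \<bar>f (s n)\<bar>"
proof -
  obtain e where "e > 0" "\<not> eventually (\<lambda>n. dist (f n) 0 < e) sequentially"
    using assms unfolding tendsto_iff by blast
  then have "infinite {n. e \<le> \<bar>f n\<bar>}"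
    by (simp add: not_eventually not_less frequently_cofinite[symmetric]
        cofinite_eq_sequentially)
  from infinite_enumerate[OF this] obtain s :: "nat \<Rightarrow> nat"
    where s: "strict_mono s" "\<forall>n. s n \<in> {n. e \<le> \<bar>f n\<bar>}"
    by blast
  show ?thesis
    using that[OF \<open>e > 0\<close> s(1)] s(2) by blast
qed

theorem proposition2p2:
  fixes X :: "(complex \<Rightarrow> complex) set" and N :: "(complex \<Rightarrow> complex) \<Rightarrow> real"
    and E :: "(nat \<Rightarrow> complex) set" and NE :: "(nat \<Rightarrow> complex) \<Rightarrow> real"
    and lam :: "nat \<Rightarrow> complex"
  assumes "banach_space_of_analytic_functions X N"
    and "\<forall>n. monomial_fun n \<in> X"
    and "\<exists>B. \<forall>n. N (monomial_fun n) \<le> B"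
    and "banach_sequence_lattice E NE"
    and "embeds_in_linfty E NE"
    and "\<forall>f\<in>X. multiplier_op lam f \<in> E"
    and "compact_mult_operator X N E NE (multiplier_op lam)"
  shows "limsup (\<lambda>n. ereal (cmod (lam n))) = 0"
proof -
  \<comment> \<open>Only the monomials of \<open>X\<close> enter.\<close>
  have "(\<lambda>n. cmod (lam n)) \<longlonglongrightarrow> 0"
  proof (rule ccontr)
    assume "\<not> ?thesis"
    then obtain e and s :: "nat \<Rightarrow> nat"
      where e: "e > 0" "strict_mono s" "\<And>n. e \<le> \<bar>cmod (lam (s n))\<bar>"
      by (rule not_LIMSEQ_zero_subseq_bounded_below) blast
    obtain B where "\<forall>n. N (monomial_fun n) \<le> B"
      using assms(3) by blast
    then obtain r x where rx: "strict_mono r" "x \<in> E"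
        "(\<lambda>k. NE (\<lambda>n. multiplier_op lam (monomial_fun (s (r k))) n - x n)) \<longlonglongrightarrow> 0"
      using compact_mult_operator_subseq[OF assms(7), of "\<lambda>k. monomial_fun (s k)"] assms(2)
      by blast
    have "uniform_limit UNIV (\<lambda>k. multiplier_op lam (monomial_fun (s (r k)))) x sequentially"
      using rx assms(2,4,5,6)
      by (intro embeds_in_linfty_uniform_limit banach_sequence_lattice_diff) auto
    moreover have "filterlim (\<lambda>k. s (r k)) at_top sequentially"
      using strict_mono_o[OF e(2) rx(1)] by (simp add: o_def filterlim_subseq)
    ultimately show False
      using not_uniform_limit_unit_vectors[of "\<lambda>k. s (r k)" e "\<lambda>k. lam (s (r k))"] e(1,3)
      by (simp add: multiplier_op_monomial_fun)
  qed
  then have "limsup (\<lambda>n. ereal (cmod (lam n))) = ereal 0"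
    by (intro lim_imp_Limsup) (auto simp: tendsto_ereal)
  then show ?thesis
    by (simp add: zero_ereal_def)
qed

end
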